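(* Suppose the e-values are valid, i.e. $\mathbb{E}[e_t\mid\mathcal{F}_{t-1}]\le 1$ almost surely for every $t$ with $\theta_t=0$. Define the oracle e-value-based FDP estimate $$\mathrm{FDP}^*_{\mathrm{e}}(t)=\sum_{j\in\mathcal{H}_0(t)}\frac{\alpha_j}{R_{j-1}+1}.$$ Then for every $t\ge1$: if $\mathbb{E}[\mathrm{FDP}^*_{\mathrm{e}}(t)]\le\alpha$, then $\mathrm{FDR}(t)\le\alpha$.
   Context: Let $\alpha\in(0,1)$ be a target level. Hypotheses are indexed by $t=1,2,\dots$; $\theta_t\in\{0,1\}$ is a fixed (non-random) indicator with $\theta_t=0$ iff the $t$-th null hypothesis is true. $e_1,e_2,\dots$ are nonnegative random variables (e-values). Testing levels $\alpha_1,\alpha_2,\dots$ are nonnegative random variables and the decisions are $\delta_t=\mathbb{1}\{e_t\ge 1/\alpha_t\}$ (with $\delta_t=0$ when $\alpha_t=0$). Let $\mathcal{F}_t=\sigma(\delta_1,\dots,\delta_t)$, $\mathcal{F}_0$ trivial; each $\alpha_t$ is required to be $\mathcal{F}_{t-1}$-measurable. $R_t=\sum_{j=1}^t\delta_j$, $R_0=0$. $\mathcal{H}_0(t)=\{j\le t:\theta_j=0\}$. $\mathrm{FDR}(t)=\mathbb{E}\big[\sum_{j\in\mathcal{H}_0(t)}\delta_j/(R_t\vee 1)\big]$. *)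

theory Defs
  imports "HOL-Probability.Probability"
begin

definition decision :: "(nat \<Rightarrow> 'a \<Rightarrow> real) \<Rightarrow> (nat \<Rightarrow> 'a \<Rightarrow> real) \<Rightarrow> nat \<Rightarrow> 'a \<Rightarrow> bool" where
  "decision alpha e t x \<longleftrightarrow> alpha t x \<noteq> 0 \<and> e t x \<ge> 1 / alpha t x"

definition rejections :: "(nat \<Rightarrow> 'a \<Rightarrow> real) \<Rightarrow> (nat \<Rightarrow> 'a \<Rightarrow> real) \<Rightarrow> nat \<Rightarrow> 'a \<Rightarrow> nat" where
  "rejections alpha e t x = card {j \<in> {1..t}. decision alpha e j x}"

definition filt :: "'a measure \<Rightarrow> (nat \<Rightarrow> 'a \<Rightarrow> real) \<Rightarrow> (nat \<Rightarrow> 'a \<Rightarrow> real) \<Rightarrow> nat \<Rightarrow> 'a measure" where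
  "filt M alpha e t = sigma (space M) {{x \<in> space M. decision alpha e j x} | j. j \<in> {1..t}}"

definition nulls :: "(nat \<Rightarrow> nat) \<Rightarrow> nat \<Rightarrow> nat set" where
  "nulls theta t = {j \<in> {1..t}. theta j = 0}"

definition FDP :: "(nat \<Rightarrow> nat) \<Rightarrow> (nat \<Rightarrow> 'a \<Rightarrow> real) \<Rightarrow> (nat \<Rightarrow> 'a \<Rightarrow> real) \<Rightarrow> nat \<Rightarrow> 'a \<Rightarrow> real" where
  "FDP theta alpha e t x =
     (\<Sum>j\<in>nulls theta t. (if decision alpha e j x then 1 else 0)) / max (real (rejections alpha e t x)) 1"

definition FDR :: "'a measure \<Rightarrow> (nat \<Rightarrow> nat) \<Rightarrow> (nat \<Rightarrow> 'a \<Rightarrow> real) \<Rightarrow> (nat \<Rightarrow> 'a \<Rightarrow> real) \<Rightarrow> nat \<Rightarrow> real" where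
  "FDR M theta alpha e t = (\<integral>x. FDP theta alpha e t x \<partial>M)"

definition FDP_star_e :: "(nat \<Rightarrow> nat) \<Rightarrow> (nat \<Rightarrow> 'a \<Rightarrow> real) \<Rightarrow> (nat \<Rightarrow> 'a \<Rightarrow> real) \<Rightarrow> nat \<Rightarrow> 'a \<Rightarrow> real" where
  "FDP_star_e theta alpha e t x =
     (\<Sum>j\<in>nulls theta t. alpha j x / (real (rejections alpha e (j - 1) x) + 1))"

end

theory Submission
  imports Defs
begin

text \<open>
  If hypothesis j is rejected then alpha_j e_j >= 1 and R_t >= R_(j-1) + 1, so the share of a
  true null j in FDP(t) is at most w_j e_j with the weight w_j = alpha_j / (R_(j-1) + 1).
  Since w_j is F_(j-1)-measurable, conditioning on F_(j-1) and E[e_j | F_(j-1)] <= 1 give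
  E[w_j e_j] <= E[w_j]; summing over the true nulls bounds FDR(t) by E[FDP*_e(t)].
\<close>

lemma space_filt [simp]: "space (filt M alpha e n) = space M"
  unfolding filt_def by (simp add: space_measure_of_conv)

lemma sets_filt:
  "sets (filt M alpha e n) =
     sigma_sets (space M) {{x \<in> space M. decision alpha e j x} | j. j \<in> {1..n}}"
  unfolding filt_def by (rule sets_measure_of) auto

lemma decision_in_sets_filt:
  assumes "1 \<le> j" "j \<le> n"
  shows "{x \<in> space M. decision alpha e j x} \<in> sets (filt M alpha e n)"
  unfolding sets_filt using assms by (intro sigma_sets.Basic) auto

lemma rejections_measurable_filt:
  "(\<lambda>x. real (rejections alpha e n x)) \<in> borel_measurable (filt M alpha e n)"
proof -
  have "real (rejections alpha e n x) = (\<Sum>j\<in>{1..n}. if decision alpha e j x then 1 else 0)" for x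
  proof -
    have "{j \<in> {1..n}. decision alpha e j x} = {1..n} \<inter> {j. decision alpha e j x}" by auto
    then show ?thesis unfolding rejections_def by (simp add: sum.If_cases)
  qed
  moreover have "(\<lambda>x. if decision alpha e j x then 1 else 0 :: real) \<in> borel_measurable (filt M alpha e n)"
    if "j \<in> {1..n}" for j
    using decision_in_sets_filt[of j n M alpha e] that by (intro measurable_If) auto
  ultimately show ?thesis by (simp add: borel_measurable_sum)
qed

lemma decision_in_sets:
  assumes e_meas: "\<And>t. e t \<in> borel_measurable M"
    and alpha_meas: "\<And>t. t \<ge> 1 \<Longrightarrow> alpha t \<in> borel_measurable (filt M alpha e (t - 1))"
    and "1 \<le> j"
  shows "{x \<in> space M. decision alpha e j x} \<in> sets M"
  using \<open>1 \<le> j\<close>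
proof (induction j rule: less_induct)
  case (less j)
  have "sets (filt M alpha e (j - 1)) \<subseteq> sets M"
    unfolding sets_filt using less.IH by (intro sets.sigma_sets_subset) auto
  then have "alpha j \<in> borel_measurable M"
    using alpha_meas[OF less.prems] by (rule borel_measurable_subalgebra[OF _ space_filt])
  then show ?case
    unfolding decision_def using e_meas[of j] by measurable
qed

lemma subalgebra_filt:
  assumes "\<And>t. e t \<in> borel_measurable M"
    and "\<And>t. t \<ge> 1 \<Longrightarrow> alpha t \<in> borel_measurable (filt M alpha e (t - 1))"
  shows "subalgebra M (filt M alpha e n)"
  unfolding subalgebra_def sets_filt
  using decision_in_sets[OF assms] by (simp, intro sets.sigma_sets_subset) auto

lemma rejections_before_less:
  assumes "1 \<le> j" "j \<le> t" "decision alpha e j x"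
  shows "rejections alpha e (j - 1) x < rejections alpha e t x"
proof -
  have "insert j {i \<in> {1..j - 1}. decision alpha e i x} \<subseteq> {i \<in> {1..t}. decision alpha e i x}"
    using assms by auto
  then have "card (insert j {i \<in> {1..j - 1}. decision alpha e i x}) \<le> rejections alpha e t x"
    unfolding rejections_def by (intro card_mono) auto
  then show ?thesis
    unfolding rejections_def by (subst (asm) card_insert_disjoint) auto
qed

lemma rejected_share_le:
  assumes "1 \<le> j" "j \<le> t" "0 \<le> alpha j x" "0 \<le> e j x"
  shows "(if decision alpha e j x then 1 else 0) / max (real (rejections alpha e t x)) 1
           \<le> alpha j x / (real (rejections alpha e (j - 1) x) + 1) * e j x"
proof (cases "decision alpha e j x")
  case True
  then have "0 < alpha j x" "1 / alpha j x \<le> e j x"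
    using assms(3) unfolding decision_def by auto
  then have "1 \<le> alpha j x * e j x"
    by (simp add: divide_le_eq mult.commute)
  moreover have "real (rejections alpha e (j - 1) x) + 1 \<le> max (real (rejections alpha e t x)) 1"
    using rejections_before_less[OF assms(1,2) True] by linarith
  ultimately show ?thesis
    using True by (simp add: frac_le)
qed (use assms in simp)

lemma FDP_le_weighted_e_values:
  assumes "\<And>j. 0 \<le> alpha j x" "\<And>j. 0 \<le> e j x"
  shows "FDP theta alpha e t x
           \<le> (\<Sum>j\<in>nulls theta t. alpha j x / (real (rejections alpha e (j - 1) x) + 1) * e j x)"
  unfolding FDP_def sum_divide_distrib
  by (intro sum_mono rejected_share_le) (auto simp: nulls_def assms)

lemma (in sigma_finite_subalgebra) nn_integral_mult_le_of_nn_cond_exp_le_1: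
  assumes "f \<in> borel_measurable F" "g \<in> borel_measurable M"
    and "AE x in M. nn_cond_exp M F g x \<le> 1"
  shows "(\<integral>\<^sup>+ x. f x * g x \<partial>M) \<le> (\<integral>\<^sup>+ x. f x \<partial>M)"
proof -
  have "(\<integral>\<^sup>+ x. f x * g x \<partial>M) = (\<integral>\<^sup>+ x. f x * nn_cond_exp M F g x \<partial>M)"
    using assms by (simp add: nn_cond_exp_intg)
  also have "\<dots> \<le> (\<integral>\<^sup>+ x. f x \<partial>M)"
  proof (rule nn_integral_mono_AE)
    show "AE x in M. f x * nn_cond_exp M F g x \<le> f x"
      using assms(3) by eventually_elim (auto intro: mult_left_le)
  qed
  finally show ?thesis .
qed

lemma nn_integral_FDP_le_FDP_star_e:
  assumes fin: "finite_measure M"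
    and e_meas: "\<And>t. e t \<in> borel_measurable M"
    and e_nonneg: "\<And>t x. x \<in> space M \<Longrightarrow> 0 \<le> e t x"
    and alpha_nonneg: "\<And>t x. x \<in> space M \<Longrightarrow> 0 \<le> alpha t x"
    and alpha_meas: "\<And>t. t \<ge> 1 \<Longrightarrow> alpha t \<in> borel_measurable (filt M alpha e (t - 1))"
    and e_valid: "\<And>t. t \<ge> 1 \<Longrightarrow> theta t = 0 \<Longrightarrow>
           AE x in M. nn_cond_exp M (filt M alpha e (t - 1)) (\<lambda>y. ennreal (e t y)) x \<le> 1"
  shows "(\<integral>\<^sup>+ x. ennreal (FDP theta alpha e t x) \<partial>M)
           \<le> (\<integral>\<^sup>+ x. ennreal (FDP_star_e theta alpha e t x) \<partial>M)"
proof -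
  define w where "w j x = alpha j x / (real (rejections alpha e (j - 1) x) + 1)" for j x
  have w_nonneg: "x \<in> space M \<Longrightarrow> 0 \<le> w j x" for j x
    unfolding w_def using alpha_nonneg by simp
  have w_meas: "w j \<in> borel_measurable (filt M alpha e (j - 1))" if "1 \<le> j" for j
    unfolding w_def[abs_def]
    using alpha_meas[OF that] rejections_measurable_filt by measurable
  have w_meas_M: "w j \<in> borel_measurable M" if "1 \<le> j" for j
    using subalgebra_filt[OF e_meas alpha_meas]
    by (intro borel_measurable_subalgebra[OF _ space_filt w_meas[OF that]]) (simp add: subalgebra_def)
  have null: "1 \<le> j \<and> theta j = 0" if "j \<in> nulls theta t" for j
    using that unfolding nulls_def by auto
  have "(\<integral>\<^sup>+ x. ennreal (FDP theta alpha e t x) \<partial>M)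
      \<le> (\<integral>\<^sup>+ x. (\<Sum>j\<in>nulls theta t. ennreal (w j x) * ennreal (e j x)) \<partial>M)"
  proof (intro nn_integral_mono)
    fix x assume x: "x \<in> space M"
    have "FDP theta alpha e t x \<le> (\<Sum>j\<in>nulls theta t. w j x * e j x)"
      unfolding w_def by (rule FDP_le_weighted_e_values) (use alpha_nonneg[OF x] e_nonneg[OF x] in auto)
    then have "ennreal (FDP theta alpha e t x) \<le> ennreal (\<Sum>j\<in>nulls theta t. w j x * e j x)"
      by (rule ennreal_leI)
    also have "\<dots> = (\<Sum>j\<in>nulls theta t. ennreal (w j x) * ennreal (e j x))"
      using w_nonneg[OF x] e_nonneg[OF x] by (simp add: sum_ennreal[symmetric] ennreal_mult)
    finally show "ennreal (FDP theta alpha e t x) \<le> (\<Sum>j\<in>nulls theta t. ennreal (w j x) * ennreal (e j x))" .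
  qed
  also have "\<dots> = (\<Sum>j\<in>nulls theta t. \<integral>\<^sup>+ x. ennreal (w j x) * ennreal (e j x) \<partial>M)"
    using w_meas_M e_meas null by (intro nn_integral_sum) auto
  also have "\<dots> \<le> (\<Sum>j\<in>nulls theta t. \<integral>\<^sup>+ x. ennreal (w j x) \<partial>M)"
  proof (intro sum_mono)
    fix j assume "j \<in> nulls theta t"
    then have j: "1 \<le> j" "theta j = 0" using null by auto
    interpret finite_measure_subalgebra M "filt M alpha e (j - 1)"
      using fin subalgebra_filt[OF e_meas alpha_meas]
      by (simp add: finite_measure_subalgebra_def finite_measure_subalgebra_axioms_def)
    show "(\<integral>\<^sup>+ x. ennreal (w j x) * ennreal (e j x) \<partial>M) \<le> (\<integral>\<^sup>+ x. ennreal (w j x) \<partial>M)"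
      using w_meas[OF j(1)] e_meas e_valid[OF j]
      by (intro nn_integral_mult_le_of_nn_cond_exp_le_1) auto
  qed
  also have "\<dots> = (\<integral>\<^sup>+ x. (\<Sum>j\<in>nulls theta t. ennreal (w j x)) \<partial>M)"
    using w_meas_M null by (intro nn_integral_sum[symmetric]) auto
  also have "\<dots> = (\<integral>\<^sup>+ x. ennreal (FDP_star_e theta alpha e t x) \<partial>M)"
    using w_nonneg unfolding FDP_star_e_def w_def[symmetric]
    by (intro nn_integral_cong) (simp add: sum_ennreal)
  finally show ?thesis .
qed

theorem theorem1:
  fixes M :: "'a measure" and a :: real
    and theta :: "nat \<Rightarrow> nat"
    and e alpha :: "nat \<Rightarrow> 'a \<Rightarrow> real"
  assumes "prob_space M"
    and "0 < a" "a < 1"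
    and "\<And>t. e t \<in> borel_measurable M"
    and "\<And>t x. x \<in> space M \<Longrightarrow> 0 \<le> e t x"
    and "\<And>t x. x \<in> space M \<Longrightarrow> 0 \<le> alpha t x"
    and "\<And>t. t \<ge> 1 \<Longrightarrow> alpha t \<in> borel_measurable (filt M alpha e (t - 1))"
    and "\<And>t. t \<ge> 1 \<Longrightarrow> theta t = 0 \<Longrightarrow>
           AE x in M. nn_cond_exp M (filt M alpha e (t - 1)) (\<lambda>y. ennreal (e t y)) x \<le> 1"
    and "t \<ge> 1"
    and "(\<integral>\<^sup>+ x. ennreal (FDP_star_e theta alpha e t x) \<partial>M) \<le> ennreal a"
  shows "FDR M theta alpha e t \<le> a"
proof -
  have "finite_measure M"
    using \<open>prob_space M\<close> by (simp add: prob_space_def)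
  then have "(\<integral>\<^sup>+ x. ennreal (FDP theta alpha e t x) \<partial>M)
      \<le> (\<integral>\<^sup>+ x. ennreal (FDP_star_e theta alpha e t x) \<partial>M)"
    using assms(4-8) by (rule nn_integral_FDP_le_FDP_star_e)
  also note \<open>(\<integral>\<^sup>+ x. ennreal (FDP_star_e theta alpha e t x) \<partial>M) \<le> ennreal a\<close>
  finally show ?thesis
    unfolding FDR_def using \<open>0 < a\<close> by (intro integral_real_bounded) auto
qed

end
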